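(* Let $(\bar A,\bar B=\mathbb I_m,\bar C=\mathbb I_p)$ be a structured system whose DAG of SCCs $\mathcal D_A$ is a hierarchical network, with feedback cost matrix $P$. If $\mathcal N_i$ and $\mathcal N_k$ are two distinct vertices of $\mathcal D_A$ in the same layer $L_f$, then $A(\mathcal N_i)\cap A(\mathcal N_k)=\emptyset$.
   Context: Dedicated: each column of $\bar B\in\{0,\star\}^{n\times m}$ and each row of $\bar C\in\{0,\star\}^{p\times n}$ has exactly one $\star$. Edges: $(x_j,x_i)$ iff $\bar A_{ij}=\star$, $(u_j,x_i)$ iff $\bar B_{ij}=\star$, $(x_j,y_i)$ iff $\bar C_{ij}=\star$. $\mathcal D_A$: vertices are the SCCs of the state digraph, with edges induced by edges between their states. Hierarchical network: a root with no incoming edge, every other vertex has exactly one parent. Layer $L_f$ = set of vertices at distance (number of edges of a shortest directed path) $f-1$ from the root. Ancestor/descendant via directed paths (including the vertex itself). For a vertex $\mathcal N$: $U(\mathcal N)$ = inputs with an edge into a state of an ancestor SCC of $\mathcal N$; $Y(\mathcal N)$ = outputs with an edge from a state of a descendant SCC of $\mathcal N$; $A(\mathcal N)=\{(y_j,u_i):y_j\in Y(\mathcal N),u_i\in U(\mathcal N)\}$. *)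

theory Defs
  imports Complex_Main
begin

text \<open>Pattern matrices are
  boolean functions: Abar i j = True iff entry (i,j) of Abar is a star (i,j < n);
  B i j for the n x m matrix Bbar; C i j for the p x n matrix Cbar.\<close>

definition dedicated_input :: "nat \<Rightarrow> nat \<Rightarrow> (nat \<Rightarrow> nat \<Rightarrow> bool) \<Rightarrow> bool" where
  "dedicated_input n m B \<longleftrightarrow> (\<forall>j<m. \<exists>!i. i < n \<and> B i j) \<and> (\<forall>i j. B i j \<longrightarrow> i < n \<and> j < m)"

definition dedicated_output :: "nat \<Rightarrow> nat \<Rightarrow> (nat \<Rightarrow> nat \<Rightarrow> bool) \<Rightarrow> bool" where
  "dedicated_output n p C \<longleftrightarrow> (\<forall>i<p. \<exists>!j. j < n \<and> C i j) \<and> (\<forall>i j. C i j \<longrightarrow> i < p \<and> j < n)"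

definition state_edges :: "nat \<Rightarrow> (nat \<Rightarrow> nat \<Rightarrow> bool) \<Rightarrow> (nat \<times> nat) set" where
  "state_edges n Abar = {(j, i). i < n \<and> j < n \<and> Abar i j}"

definition scc_of :: "nat \<Rightarrow> (nat \<Rightarrow> nat \<Rightarrow> bool) \<Rightarrow> nat \<Rightarrow> nat set" where
  "scc_of n Abar x = {y. y < n \<and> (x, y) \<in> (state_edges n Abar)\<^sup>* \<and> (y, x) \<in> (state_edges n Abar)\<^sup>*}"

definition sccs :: "nat \<Rightarrow> (nat \<Rightarrow> nat \<Rightarrow> bool) \<Rightarrow> nat set set" where
  "sccs n Abar = scc_of n Abar ` {..<n}"

definition dag_edges :: "nat \<Rightarrow> (nat \<Rightarrow> nat \<Rightarrow> bool) \<Rightarrow> (nat set \<times> nat set) set" where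
  "dag_edges n Abar = {(S, T). S \<in> sccs n Abar \<and> T \<in> sccs n Abar \<and> S \<noteq> T \<and>
      (\<exists>x\<in>S. \<exists>y\<in>T. (x, y) \<in> state_edges n Abar)}"

definition hierarchical :: "'v set \<Rightarrow> ('v \<times> 'v) set \<Rightarrow> 'v \<Rightarrow> bool" where
  "hierarchical V E r \<longleftrightarrow> r \<in> V \<and> (\<forall>u. (u, r) \<notin> E) \<and>
      (\<forall>v\<in>V. v \<noteq> r \<longrightarrow> (\<exists>!u. u \<in> V \<and> (u, v) \<in> E))"

definition layer :: "'v set \<Rightarrow> ('v \<times> 'v) set \<Rightarrow> 'v \<Rightarrow> nat \<Rightarrow> 'v set" where
  "layer V E r f = {v \<in> V. 1 \<le> f \<and> (r, v) \<in> E ^^ (f - 1) \<and> (\<forall>k < f - 1. (r, v) \<notin> E ^^ k)}"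

definition U_set :: "nat \<Rightarrow> (nat \<Rightarrow> nat \<Rightarrow> bool) \<Rightarrow> nat \<Rightarrow> (nat \<Rightarrow> nat \<Rightarrow> bool) \<Rightarrow> nat set \<Rightarrow> nat set" where
  "U_set n Abar m B N = {u. u < m \<and> (\<exists>N' x. (N', N) \<in> (dag_edges n Abar)\<^sup>* \<and> N' \<in> sccs n Abar \<and> x \<in> N' \<and> B x u)}"

definition Y_set :: "nat \<Rightarrow> (nat \<Rightarrow> nat \<Rightarrow> bool) \<Rightarrow> nat \<Rightarrow> (nat \<Rightarrow> nat \<Rightarrow> bool) \<Rightarrow> nat set \<Rightarrow> nat set" where
  "Y_set n Abar p C N = {y. y < p \<and> (\<exists>N' x. (N, N') \<in> (dag_edges n Abar)\<^sup>* \<and> N' \<in> sccs n Abar \<and> x \<in> N' \<and> C y x)}"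

definition A_set :: "nat \<Rightarrow> (nat \<Rightarrow> nat \<Rightarrow> bool) \<Rightarrow> nat \<Rightarrow> (nat \<Rightarrow> nat \<Rightarrow> bool) \<Rightarrow> nat \<Rightarrow> (nat \<Rightarrow> nat \<Rightarrow> bool) \<Rightarrow> nat set \<Rightarrow> (nat \<times> nat) set" where
  "A_set n Abar m B p C N = {(y, u). y \<in> Y_set n Abar p C N \<and> u \<in> U_set n Abar m B N}"

end

theory Submission
  imports Defs
begin

text \<open>In a hierarchical network every vertex has a unique path from the root, so a vertex
  determines both its layer and its ancestor in every earlier layer. Hence two distinct
  vertices of one layer have disjoint sets of descendants. Since the outputs are dedicated,
  an output common to Y(N_i) and Y(N_k) would be attached to a single state, whose SCC would
  be a common descendant of N_i and N_k. So already Y(N_i) and Y(N_k) are disjoint.\<close>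

lemma hierarchical_relpow_source_unique:
  assumes hier: "hierarchical V E r" and E_sub: "E \<subseteq> V \<times> V"
    and "(x, z) \<in> E ^^ a" "(w, z) \<in> E ^^ a" "z \<in> V"
  shows "x = w"
  using assms(3-5)
proof (induction a arbitrary: z)
  case 0
  then show ?case by simp
next
  case (Suc a)
  from Suc.prems(1) obtain y where y: "(x, y) \<in> E ^^ a" "(y, z) \<in> E" by auto
  from Suc.prems(2) obtain y' where y': "(w, y') \<in> E ^^ a" "(y', z) \<in> E" by auto
  have "z \<noteq> r" using hier y(2) unfolding hierarchical_def by blast
  then have "y = y'"
    using hier y(2) y'(2) E_sub Suc.prems(3) unfolding hierarchical_def by blast
  moreover have "y \<in> V" using y(2) E_sub by blast
  ultimately show ?case using Suc.IH y(1) y'(1) by blast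
qed

lemma hierarchical_root_relpow_length_unique:
  assumes hier: "hierarchical V E r" and E_sub: "E \<subseteq> V \<times> V"
    and "(r, z) \<in> E ^^ a" "(r, z) \<in> E ^^ b" "z \<in> V"
  shows "a = b"
proof -
  have no_longer: False if "(r, z) \<in> E ^^ c" "(r, z) \<in> E ^^ (d + c)" "d > 0" for c d
  proof -
    from that(2) obtain y where "(r, y) \<in> E ^^ d" "(y, z) \<in> E ^^ c"
      by (auto simp: relpow_add)
    with that(1) have "(r, r) \<in> E ^^ d"
      using hierarchical_relpow_source_unique[OF hier E_sub] \<open>z \<in> V\<close> by blast
    with \<open>d > 0\<close> obtain q where "(q, r) \<in> E"
      by (metis gr0_implies_Suc relpow_Suc_E)
    then show False using hier unfolding hierarchical_def by blast
  qed
  show ?thesis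
  proof (cases a b rule: linorder_cases)
    case less
    then obtain d where "b = d + a" "d > 0" by (metis add.commute less_imp_add_positive)
    then show ?thesis using no_longer assms(3,4) by blast
  next
    case greater
    then obtain d where "a = d + b" "d > 0" by (metis add.commute less_imp_add_positive)
    then show ?thesis using no_longer assms(3,4) by blast
  qed
qed

lemma layer_common_descendant_unique:
  assumes hier: "hierarchical V E r" and E_sub: "E \<subseteq> V \<times> V"
    and u: "u \<in> layer V E r f" and v: "v \<in> layer V E r f"
    and "(u, z) \<in> E\<^sup>*" "(v, z) \<in> E\<^sup>*" "z \<in> V"
  shows "u = v"
proof -
  obtain k j where k: "(u, z) \<in> E ^^ k" and j: "(v, z) \<in> E ^^ j"
    using assms(5,6) rtrancl_imp_relpow by metis
  have "(r, u) \<in> E ^^ (f - 1)" "(r, v) \<in> E ^^ (f - 1)"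
    using u v unfolding layer_def by auto
  then have "(r, z) \<in> E ^^ (f - 1 + k)" "(r, z) \<in> E ^^ (f - 1 + j)"
    using k j by (auto simp: relpow_add)
  then have "k = j"
    using hierarchical_root_relpow_length_unique[OF hier E_sub] \<open>z \<in> V\<close> by force
  then show ?thesis
    using hierarchical_relpow_source_unique[OF hier E_sub] k j \<open>z \<in> V\<close> by blast
qed

lemma dag_edges_subset_sccs: "dag_edges n Abar \<subseteq> sccs n Abar \<times> sccs n Abar"
  unfolding dag_edges_def by auto

lemma sccs_eq_scc_of:
  assumes "N \<in> sccs n Abar" "x \<in> N"
  shows "N = scc_of n Abar x"
proof -
  obtain a where "N = scc_of n Abar a" using assms(1) unfolding sccs_def by auto
  with assms(2) show ?thesis unfolding scc_of_def by (auto intro: rtrancl_trans)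
qed

lemma Y_set_common_output_common_descendant:
  assumes "dedicated_output n p C"
    and "y \<in> Y_set n Abar p C N" "y \<in> Y_set n Abar p C N'"
  obtains M where "M \<in> sccs n Abar"
    "(N, M) \<in> (dag_edges n Abar)\<^sup>*" "(N', M) \<in> (dag_edges n Abar)\<^sup>*"
proof -
  from assms(2,3) obtain M x M' x' where
    M: "(N, M) \<in> (dag_edges n Abar)\<^sup>*" "M \<in> sccs n Abar" "x \<in> M" "C y x" and
    M': "(N', M') \<in> (dag_edges n Abar)\<^sup>*" "M' \<in> sccs n Abar" "x' \<in> M'" "C y x'" and
    "y < p"
    unfolding Y_set_def by blast
  then have "x = x'" using assms(1) unfolding dedicated_output_def by blast
  then have "M = M'" using sccs_eq_scc_of M M' by metis
  then show thesis using that M M' by blast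
qed

theorem corollary3:
  fixes n m p :: nat and Abar B C :: "nat \<Rightarrow> nat \<Rightarrow> bool"
    and P :: "nat \<Rightarrow> nat \<Rightarrow> real"
    and r Ni Nk :: "nat set" and f :: nat
  assumes "dedicated_input n m B"
    and "dedicated_output n p C"
    and "hierarchical (sccs n Abar) (dag_edges n Abar) r"
    and "Ni \<in> layer (sccs n Abar) (dag_edges n Abar) r f"
    and "Nk \<in> layer (sccs n Abar) (dag_edges n Abar) r f"
    and "Ni \<noteq> Nk"
  shows "A_set n Abar m B p C Ni \<inter> A_set n Abar m B p C Nk = {}"
proof -
  have "Y_set n Abar p C Ni \<inter> Y_set n Abar p C Nk = {}"
  proof (intro equals0I)
    fix y
    assume "y \<in> Y_set n Abar p C Ni \<inter> Y_set n Abar p C Nk"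
    then obtain M where "M \<in> sccs n Abar"
      "(Ni, M) \<in> (dag_edges n Abar)\<^sup>*" "(Nk, M) \<in> (dag_edges n Abar)\<^sup>*"
      using Y_set_common_output_common_descendant[OF assms(2)] by blast
    then have "Ni = Nk"
      using layer_common_descendant_unique[OF assms(3) dag_edges_subset_sccs assms(4,5)]
      by blast
    with assms(6) show False ..
  qed
  then show ?thesis unfolding A_set_def by blast
qed

end
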